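(* Let $r\ge 2$ be an integer, let $\varphi$ be an instance of 2-Clause 3-SAT, and let $G(\varphi)$ be the graph constructed from $\varphi$ and $r$ as described in the context. If $\varphi$ is satisfiable, then $\mathrm{col}_r(G(\varphi)) \leq 6$.
   Context: 2-Clause 3-SAT: given a CNF formula $\varphi$ with clauses $c_1,\dots,c_m$ over variables $x_1,\dots,x_n$ in which each clause contains at most 3 literals and each literal ($x_j$ or $\overline{x}_j$) appears in exactly 2 clauses, decide whether $\varphi$ is satisfiable. It is assumed throughout that no variable appears twice in a single clause and there are no single-literal clauses (so each clause has 2 or 3 literals). An $\ell$-subdivided edge between $a$ and $b$ is an induced path with $\ell$ internal vertices (subdivision vertices) joining $a$ and $b$, whose internal vertices have no other neighbors. Construction of $G(\varphi)$: for each clause $c_i$ create a vertex $u_i$. For each variable $x_j$ create two vertices $v_j,v'_j$ (for literals $x_j$, $\overline{x}_j$) joined by an edge. For each clause $c_i$ containing literal $x_j$ (resp. $\overline{x}_j$), join $u_i$ and $v_j$ (resp. $v'_j$) by an $(r-1)$-subdivided edge. Add a 7-clique on new vertices $w_1,\dots,w_7$. For each clause $c_i$ add edges from $u_i$ to $w_1,\dots,w_4$, and if $c_i$ has only 2 literals also an edge from $u_i$ to $w_5$. For each variable $x_j$ add edges from $v_j$ to $w_2,w_3,w_4$ and from $v'_j$ to $w_5,w_6,w_7$. Coloring numbers: for a graph $G=(V,E)$ and a total order $\sigma$ of $V$, a vertex $v\neq u$ is $r$-reachable from $u$ if $u<_\sigma v$ and there is a $u$–$v$ path of length at most $r$ all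 of whose vertices other than $u,v$ precede $u$ in $\sigma$; $\mathrm{reach}_r(u,G_\sigma)$ is the set of such $v$, and $\mathrm{col}_r(G)=\min_\sigma\max_u|\mathrm{reach}_r(u,G_\sigma)|$ over all total orders $\sigma$ of $V$. *)

theory Defs
  imports Main
begin

text \<open>A total order of a finite vertex set is represented by a map sigma into nat that is
  injective on VG (u precedes v iff sigma u < sigma v).\<close>

definition is_path :: "'a set \<Rightarrow> ('a \<Rightarrow> 'a \<Rightarrow> bool) \<Rightarrow> 'a list \<Rightarrow> bool" where
  "is_path VG EG p \<longleftrightarrow> p \<noteq> [] \<and> distinct p \<and> set p \<subseteq> VG \<and>
     (\<forall>k. Suc k < length p \<longrightarrow> EG (p ! k) (p ! Suc k))"

text \<open>The length of a path p is length p - 1 (number of edges).\<close>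

definition reach ::
  "'a set \<Rightarrow> ('a \<Rightarrow> 'a \<Rightarrow> bool) \<Rightarrow> nat \<Rightarrow> ('a \<Rightarrow> nat) \<Rightarrow> 'a \<Rightarrow> 'a set" where
  "reach VG EG r \<sigma> u = {v \<in> VG. v \<noteq> u \<and> \<sigma> u < \<sigma> v \<and>
     (\<exists>p. is_path VG EG p \<and> hd p = u \<and> last p = v \<and> length p \<le> r + 1 \<and>
          (\<forall>w \<in> set (butlast (tl p)). \<sigma> w < \<sigma> u))}"

definition col :: "'a set \<Rightarrow> ('a \<Rightarrow> 'a \<Rightarrow> bool) \<Rightarrow> nat \<Rightarrow> nat" where
  "col VG EG r = (LEAST k. \<exists>\<sigma>. inj_on \<sigma> VG \<and>
      Max ((\<lambda>u. card (reach VG EG r \<sigma> u)) ` VG) = k)"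

text \<open>Variables are 0..<n, clauses are indexed 0..<m; clause i is the set cl i of literals.
  A literal is a pair (j, b): (j, True) is x_j and (j, False) is its negation.\<close>

definition two_clause_3sat :: "nat \<Rightarrow> nat \<Rightarrow> (nat \<Rightarrow> (nat \<times> bool) set) \<Rightarrow> bool" where
  "two_clause_3sat n m cl \<longleftrightarrow>
     (\<forall>i<m. cl i \<subseteq> {..<n} \<times> UNIV) \<and>
     (\<forall>i<m. card (cl i) = 2 \<or> card (cl i) = 3) \<and>
     (\<forall>i<m. \<forall>j. \<not> ((j, True) \<in> cl i \<and> (j, False) \<in> cl i)) \<and>
     (\<forall>j<n. \<forall>b. card {i. i < m \<and> (j, b) \<in> cl i} = 2)"

definition satisfiable :: "nat \<Rightarrow> (nat \<Rightarrow> (nat \<times> bool) set) \<Rightarrow> bool" where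
  "satisfiable m cl \<longleftrightarrow> (\<exists>a :: nat \<Rightarrow> bool. \<forall>i<m. \<exists>(j, b) \<in> cl i. a j = b)"

text \<open>U i: clause vertex u_i; V j: v_j; V' j: v'_j; W a: w_a (a = 1..7);
  S i j b k: k-th subdivision vertex (1 <= k <= r-1) on the path from u_i to the vertex
  of literal (j,b).\<close>

datatype vtx = U nat | V nat | V' nat | W nat | S nat nat bool nat

fun litv :: "nat \<Rightarrow> bool \<Rightarrow> vtx" where
  "litv j True = V j"
| "litv j False = V' j"

definition node :: "nat \<Rightarrow> nat \<Rightarrow> nat \<Rightarrow> bool \<Rightarrow> nat \<Rightarrow> vtx" where
  "node r i j b k = (if k = 0 then U i else if k = r then litv j b else S i j b k)"

definition GV :: "nat \<Rightarrow> nat \<Rightarrow> (nat \<Rightarrow> (nat \<times> bool) set) \<Rightarrow> nat \<Rightarrow> vtx set" where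
  "GV n m cl r = U ` {..<m} \<union> V ` {..<n} \<union> V' ` {..<n} \<union> W ` {1..7} \<union>
     {S i j b k | i j b k. i < m \<and> (j, b) \<in> cl i \<and> 1 \<le> k \<and> k \<le> r - 1}"

definition Gbase :: "nat \<Rightarrow> nat \<Rightarrow> (nat \<Rightarrow> (nat \<times> bool) set) \<Rightarrow> nat \<Rightarrow> vtx \<Rightarrow> vtx \<Rightarrow> bool" where
  "Gbase n m cl r x y \<longleftrightarrow>
     (\<exists>i j b k. i < m \<and> (j, b) \<in> cl i \<and> k < r \<and>
        x = node r i j b k \<and> y = node r i j b (Suc k)) \<or>
     (\<exists>j<n. x = V j \<and> y = V' j) \<or>
     (\<exists>a c. a \<in> {1..7} \<and> c \<in> {1..7} \<and> a \<noteq> c \<and> x = W a \<and> y = W c) \<or>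
     (\<exists>i<m. x = U i \<and> (y \<in> W ` {1..4} \<or> (card (cl i) = 2 \<and> y = W 5))) \<or>
     (\<exists>j<n. x = V j \<and> y \<in> W ` {2, 3, 4}) \<or>
     (\<exists>j<n. x = V' j \<and> y \<in> W ` {5, 6, 7})"

definition GE :: "nat \<Rightarrow> nat \<Rightarrow> (nat \<Rightarrow> (nat \<times> bool) set) \<Rightarrow> nat \<Rightarrow> vtx \<Rightarrow> vtx \<Rightarrow> bool" where
  "GE n m cl r x y \<longleftrightarrow> Gbase n m cl r x y \<or> Gbase n m cl r y x"

end

theory Submission
  imports Defs "HOL-Library.Countable" "HOL-Library.Product_Lexorder"
begin

(* Fix a satisfying assignment and order the vertices in layers: first the subdivision vertices,
   each path ordered from its clause vertex towards its literal vertex, then the true literal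
   vertices, the clause vertices, the false literal vertices, and finally the clique.
   A subdivision vertex then reaches only its clause vertex and the next vertex of its path.
   A true literal reaches its negation, three clique vertices and, along its two paths, its two
   clause vertices. A clause vertex reaches four or five clique vertices and the false literals of
   the clause: the true literals sit at distance r, so no path continues through them, and a
   satisfied clause has at most two false literals, at most one if it has only two literals
   (the case with the extra neighbour w5). A false literal reaches only w2, ..., w7, since its
   clause vertices are at distance r and every detour through the true literal costs an extra
   edge. A clique vertex reaches only the later clique vertices. *)

lemma earlier_path_invariant:
  fixes \<sigma> :: "'a \<Rightarrow> nat"
  assumes path: "is_path VG EG p" "hd p = u" "length p \<le> r + 1"
    and interior: "\<forall>w \<in> set (butlast (tl p)). \<sigma> w < \<sigma> u"
    and "d u = 0"
    and step: "\<And>x y. x \<in> insert u Z \<Longrightarrow> x \<in> VG \<Longrightarrow> d x < r \<Longrightarrow> y \<in> VG \<Longrightarrow> y \<noteq> u \<Longrightarrow>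
      EG x y \<Longrightarrow> \<sigma> y < \<sigma> u \<Longrightarrow> y \<in> Z \<and> d y \<le> Suc (d x)"
  shows "k < length p - 1 \<Longrightarrow> p ! k \<in> insert u Z \<and> d (p ! k) \<le> k"
proof (induction k)
  case 0
  then show ?case using path(2) \<open>d u = 0\<close> by (cases p) simp_all
next
  case (Suc k)
  then have IH: "p ! k \<in> insert u Z \<and> d (p ! k) \<le> k" by simp
  have "butlast (tl p) ! k = p ! Suc k" "k < length (butlast (tl p))"
    using Suc.prems by (simp_all add: nth_butlast nth_tl)
  then have "\<sigma> (p ! Suc k) < \<sigma> u" using interior by (metis nth_mem)
  moreover have "p ! Suc k \<noteq> u" using calculation by auto
  moreover have "p ! k \<in> VG" "p ! Suc k \<in> VG" "EG (p ! k) (p ! Suc k)"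
    using path(1) Suc.prems unfolding is_path_def by auto
  moreover have "d (p ! k) < r" using IH Suc.prems path(3) by linarith
  ultimately show ?case using step[of "p ! k" "p ! Suc k"] IH by auto
qed

(* Z contains the earlier vertices that a witnessing path may pass through, and d is a
   1-Lipschitz lower bound for the distance from u along such paths; only vertices with d x < r
   can precede the last vertex of a witnessing path. *)
lemma reach_subset_if_closed:
  assumes "d u = 0"
    and step: "\<And>x y. x \<in> insert u Z \<Longrightarrow> x \<in> VG \<Longrightarrow> d x < r \<Longrightarrow> y \<in> VG \<Longrightarrow> y \<noteq> u \<Longrightarrow>
      EG x y \<Longrightarrow> (\<sigma> u < \<sigma> y \<longrightarrow> y \<in> R) \<and> (\<sigma> y < \<sigma> u \<longrightarrow> y \<in> Z \<and> d y \<le> Suc (d x))"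
  shows "reach VG EG r \<sigma> u \<subseteq> R"
proof
  fix v assume "v \<in> reach VG EG r \<sigma> u"
  then obtain p where v: "v \<in> VG" "v \<noteq> u" "\<sigma> u < \<sigma> v"
    and p: "is_path VG EG p" "hd p = u" "last p = v" "length p \<le> r + 1"
    and interior: "\<forall>w \<in> set (butlast (tl p)). \<sigma> w < \<sigma> u"
    unfolding reach_def by blast
  have "p \<noteq> []" using p(1) unfolding is_path_def by simp
  moreover have "length p \<noteq> 1" using p(2,3) v(2) by (cases p) auto
  ultimately obtain k where k: "length p = Suc (Suc k)"
    by (metis One_nat_def length_0_conv not0_implies_Suc)
  have "p ! k \<in> insert u Z \<and> d (p ! k) \<le> k"
    using earlier_path_invariant[where d=d and Z=Z and \<sigma>=\<sigma>, OF p(1,2,4) interior assms(1)] step k by auto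
  moreover have "p ! k \<in> VG" "EG (p ! k) v"
    using p k unfolding is_path_def by (auto simp: last_conv_nth)
  moreover have "d (p ! k) < r" using calculation(1) k p(4) by linarith
  ultimately show "v \<in> R" using step v by blast
qed

lemma ex_nat_order_embedding:
  fixes f :: "'a \<Rightarrow> 'b::linorder"
  assumes "finite A" "inj_on f A"
  obtains \<sigma> :: "'a \<Rightarrow> nat"
  where "inj_on \<sigma> A" "\<And>x y. x \<in> A \<Longrightarrow> y \<in> A \<Longrightarrow> \<sigma> x < \<sigma> y \<longleftrightarrow> f x < f y"
proof -
  define \<sigma> where "\<sigma> x = card {z \<in> A. f z < f x}" for x
  have less: "\<sigma> x < \<sigma> y \<longleftrightarrow> f x < f y" if "x \<in> A" "y \<in> A" for x y
  proof
    assume "f x < f y"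
    then have "{z \<in> A. f z < f x} \<subset> {z \<in> A. f z < f y}" using that(1) by auto
    then show "\<sigma> x < \<sigma> y" unfolding \<sigma>_def using assms(1) by (simp add: psubset_card_mono)
  next
    assume "\<sigma> x < \<sigma> y"
    show "f x < f y"
    proof (rule ccontr)
      assume "\<not> f x < f y"
      then have "{z \<in> A. f z < f y} \<subseteq> {z \<in> A. f z < f x}" by auto
      then have "\<sigma> y \<le> \<sigma> x" unfolding \<sigma>_def using assms(1) by (simp add: card_mono)
      then show False using \<open>\<sigma> x < \<sigma> y\<close> by simp
    qed
  qed
  have "inj_on \<sigma> A"
  proof (rule inj_onI)
    fix x y assume "x \<in> A" "y \<in> A" "\<sigma> x = \<sigma> y"
    then have "f x = f y" using less by (metis less_irrefl linorder_neqE)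
    then show "x = y" using assms(2) \<open>x \<in> A\<close> \<open>y \<in> A\<close> by (simp add: inj_on_eq_iff)
  qed
  then show thesis using that less by blast
qed

lemma col_le_if_reach_card_le:
  assumes "finite VG" "VG \<noteq> {}" "inj_on \<sigma> VG"
    and "\<And>u. u \<in> VG \<Longrightarrow> card (reach VG EG r \<sigma> u) \<le> k"
  shows "col VG EG r \<le> k"
proof -
  have "col VG EG r \<le> Max ((\<lambda>u. card (reach VG EG r \<sigma> u)) ` VG)"
    unfolding col_def by (rule Least_le) (use assms(3) in blast)
  also have "\<dots> \<le> k" using assms by simp
  finally show ?thesis .
qed

instance vtx :: countable by countable_datatype

lemma litv_eq_if: "litv j b = (if b then V j else V' j)"
  by (cases b) simp_all

lemma GV_simps [simp]:
  "U i \<in> GV n m cl r \<longleftrightarrow> i < m"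
  "litv j c \<in> GV n m cl r \<longleftrightarrow> j < n"
  "W e \<in> GV n m cl r \<longleftrightarrow> e \<in> {1..7}"
  "S i j b k \<in> GV n m cl r \<longleftrightarrow> i < m \<and> (j, b) \<in> cl i \<and> 1 \<le> k \<and> k \<le> r - 1"
  unfolding GV_def by (auto simp: litv_eq_if)

lemma GE_S_cases:
  assumes "2 \<le> r" "GE n m cl r (S i j b k) y"
  shows "i < m \<and> (j, b) \<in> cl i \<and> 0 < k \<and> k < r \<and>
    (y = (if k = 1 then U i else S i j b (k - 1)) \<or> y = (if Suc k = r then litv j b else S i j b (Suc k)))"
  using assms unfolding GE_def Gbase_def node_def by (auto simp: litv_eq_if split: if_splits)

lemma GE_U_cases:
  assumes "2 \<le> r" "GE n m cl r (U i) y"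
  shows "y \<in> W ` {1..4} \<or> (card (cl i) = 2 \<and> y = W 5) \<or> (\<exists>j b. (j, b) \<in> cl i \<and> y = S i j b 1)"
  using assms unfolding GE_def Gbase_def node_def by (auto simp: litv_eq_if split: if_splits)

lemma GE_litv_cases:
  assumes "2 \<le> r" "GE n m cl r (litv j c) y"
  shows "y = litv j (\<not> c) \<or> y \<in> W ` (if c then {2, 3, 4} else {5, 6, 7}) \<or>
    (\<exists>i<m. (j, c) \<in> cl i \<and> y = S i j c (r - 1))"
  using assms unfolding GE_def Gbase_def node_def by (cases c) (auto simp: litv_eq_if split: if_splits)

definition layer :: "(nat \<Rightarrow> bool) \<Rightarrow> vtx \<Rightarrow> nat" where
  "layer a x = (case x of S _ _ _ _ \<Rightarrow> 0 | U _ \<Rightarrow> 2 | W _ \<Rightarrow> 4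
     | V j \<Rightarrow> (if a j then 1 else 3) | V' j \<Rightarrow> (if a j then 3 else 1))"

definition key :: "(nat \<Rightarrow> bool) \<Rightarrow> vtx \<Rightarrow> nat \<times> nat \<times> nat" where
  "key a x = (layer a x, case x of S _ _ _ k \<Rightarrow> k | _ \<Rightarrow> 0, to_nat x)"

lemma key_simps [simp]:
  "key a (S i j b k) = (0, k, to_nat (S i j b k))"
  "key a (U i) = (2, 0, to_nat (U i))"
  "key a (V j) = (if a j then 1 else 3, 0, to_nat (V j))"
  "key a (V' j) = (if a j then 3 else 1, 0, to_nat (V' j))"
  "key a (litv j c) = (if a j = c then 1 else 3, 0, to_nat (litv j c))"
  "key a (W e) = (4, 0, to_nat (W e))"
  unfolding key_def layer_def by (auto simp: litv_eq_if)

lemma inj_key: "inj (key a)"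
  by (rule injI) (simp add: key_def)

lemma clause_finite:
  assumes "two_clause_3sat n m cl" "i < m"
  shows "finite (cl i)"
  using assms unfolding two_clause_3sat_def by (metis card.infinite zero_neq_numeral)

lemma clause_card:
  assumes "two_clause_3sat n m cl" "i < m"
  shows "card (cl i) = 2 \<or> card (cl i) = 3"
  using assms unfolding two_clause_3sat_def by blast

lemma card_occurrences:
  assumes "two_clause_3sat n m cl" "j < n"
  shows "card {i. i < m \<and> (j, c) \<in> cl i} = 2"
  using assms unfolding two_clause_3sat_def by blast

lemma finite_GV:
  assumes "two_clause_3sat n m cl"
  shows "finite (GV n m cl r)"
proof -
  have "{S i j b k | i j b k. i < m \<and> (j, b) \<in> cl i \<and> 1 \<le> k \<and> k \<le> r - 1}
      \<subseteq> (\<lambda>(i, (j, b), k). S i j b k) ` (SIGMA i:{..<m}. cl i \<times> {..r})"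
    by force
  moreover have "finite (SIGMA i:{..<m}. cl i \<times> {..r})"
    using clause_finite[OF assms] by auto
  ultimately have "finite {S i j b k | i j b k. i < m \<and> (j, b) \<in> cl i \<and> 1 \<le> k \<and> k \<le> r - 1}"
    by (meson finite_imageI finite_subset)
  then show ?thesis unfolding GV_def by simp
qed

context
  fixes n m r :: nat and cl :: "nat \<Rightarrow> (nat \<times> bool) set" and a :: "nat \<Rightarrow> bool"
    and \<sigma> :: "vtx \<Rightarrow> nat"
  assumes r: "2 \<le> r"
    and sat3: "two_clause_3sat n m cl"
    and a: "\<forall>i<m. \<exists>(j, b) \<in> cl i. a j = b"
    and \<sigma>: "\<And>x y. x \<in> GV n m cl r \<Longrightarrow> y \<in> GV n m cl r \<Longrightarrow> \<sigma> x < \<sigma> y \<longleftrightarrow> key a x < key a y"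
begin

lemma reach_S_subset:
  assumes u: "S i j b k \<in> GV n m cl r"
  shows "reach (GV n m cl r) (GE n m cl r) r \<sigma> (S i j b k)
    \<subseteq> {U i, if Suc k = r then litv j b else S i j b (Suc k)}" (is "_ \<subseteq> ?R")
proof (rule reach_subset_if_closed[where d = "\<lambda>_. 0" and Z = "{S i j b k' | k'. 0 < k' \<and> k' < k}"])
  fix x y assume "x \<in> insert (S i j b k) {S i j b k' | k'. 0 < k' \<and> k' < k}"
    and y: "y \<in> GV n m cl r" "y \<noteq> S i j b k" and e: "GE n m cl r x y"
  then obtain k' where k': "x = S i j b k'" "0 < k'" "k' \<le> k" using u by auto
  then have "y = (if k' = 1 then U i else S i j b (k' - 1)) \<or>
      y = (if Suc k' = r then litv j b else S i j b (Suc k'))"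
    using GE_S_cases[OF r] e by blast
  then show "(\<sigma> (S i j b k) < \<sigma> y \<longrightarrow> y \<in> ?R) \<and>
      (\<sigma> y < \<sigma> (S i j b k) \<longrightarrow> y \<in> {S i j b k' | k'. 0 < k' \<and> k' < k} \<and> 0 \<le> Suc 0)"
    using \<sigma>[OF u y(1)] \<sigma>[OF y(1) u] u y k' by (auto split: if_splits)
qed simp

lemma reach_true_litv_subset:
  assumes u: "litv j c \<in> GV n m cl r" and "a j = c"
  shows "reach (GV n m cl r) (GE n m cl r) r \<sigma> (litv j c)
    \<subseteq> insert (litv j (\<not> c)) (W ` (if c then {2, 3, 4} else {5, 6, 7}) \<union> U ` {i. i < m \<and> (j, c) \<in> cl i})"
    (is "_ \<subseteq> ?R")
proof (rule reach_subset_if_closed[where d = "\<lambda>_. 0"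
      and Z = "{S i j c k | i k. i < m \<and> (j, c) \<in> cl i \<and> 0 < k \<and> k < r}"])
  fix x y assume x: "x \<in> insert (litv j c) {S i j c k | i k. i < m \<and> (j, c) \<in> cl i \<and> 0 < k \<and> k < r}"
    and y: "y \<in> GV n m cl r" "y \<noteq> litv j c" and e: "GE n m cl r x y"
  note order = \<sigma>[OF u y(1)] \<sigma>[OF y(1) u]
  from x consider (source) "x = litv j c" | (path) i k where "x = S i j c k" "0 < k" "k < r"
    by blast
  then show "(\<sigma> (litv j c) < \<sigma> y \<longrightarrow> y \<in> ?R) \<and> (\<sigma> y < \<sigma> (litv j c) \<longrightarrow>
      y \<in> {S i j c k | i k. i < m \<and> (j, c) \<in> cl i \<and> 0 < k \<and> k < r} \<and> 0 \<le> Suc 0)"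
  proof cases
    case source
    from GE_litv_cases[OF r e[unfolded source]] show ?thesis
      using order \<open>a j = c\<close> y r by (auto split: if_splits)
  next
    case (path i k)
    from GE_S_cases[OF r e[unfolded path(1)]] show ?thesis
      using path order \<open>a j = c\<close> y by (auto split: if_splits)
  qed
qed simp

lemma reach_U_subset:
  assumes u: "U i \<in> GV n m cl r"
  shows "reach (GV n m cl r) (GE n m cl r) r \<sigma> (U i)
    \<subseteq> W ` {1..4} \<union> (if card (cl i) = 2 then {W 5} else {}) \<union> (\<lambda>(j, b). litv j b) ` {(j, b) \<in> cl i. a j \<noteq> b}"
    (is "_ \<subseteq> ?R")
proof -
  let ?Z = "{S i j b k | j b k. (j, b) \<in> cl i \<and> 0 < k \<and> k < r} \<union> {litv j b | j b. (j, b) \<in> cl i \<and> a j = b}"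
  define d where "d x = (case x of S _ _ _ k \<Rightarrow> k | U _ \<Rightarrow> 0 | _ \<Rightarrow> r)" for x
  have d_simps: "d (S i' j b k) = k" "d (U i') = 0" "d (litv j b) = r" "d (V j) = r" "d (V' j) = r"
    for i' j b k
    unfolding d_def by (simp_all add: litv_eq_if)
  show ?thesis
  proof (rule reach_subset_if_closed[where d = d and Z = ?Z])
    fix x y assume x: "x \<in> insert (U i) ?Z" "d x < r"
      and y: "y \<in> GV n m cl r" "y \<noteq> U i" and e: "GE n m cl r x y"
    note order = \<sigma>[OF u y(1)] \<sigma>[OF y(1) u]
    from x consider (source) "x = U i" | (path) j b k where "x = S i j b k" "(j, b) \<in> cl i" "0 < k" "k < r"
      by (auto simp: d_simps)
    then show "(\<sigma> (U i) < \<sigma> y \<longrightarrow> y \<in> ?R) \<and> (\<sigma> y < \<sigma> (U i) \<longrightarrow> y \<in> ?Z \<and> d y \<le> Suc (d x))"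
    proof cases
      case source
      from GE_U_cases[OF r e[unfolded source]] show ?thesis
        using source order y r by (auto simp: d_simps)
    next
      case (path j b k)
      from GE_S_cases[OF r e[unfolded path(1)]] show ?thesis
        using path order y by (auto simp: d_simps split: if_splits)
    qed
  qed (simp add: d_simps)
qed

lemma reach_false_litv_subset:
  assumes u: "litv j c \<in> GV n m cl r" and "a j \<noteq> c"
  shows "reach (GV n m cl r) (GE n m cl r) r \<sigma> (litv j c) \<subseteq> W ` {2..7}"
proof -
  let ?Z = "insert (litv j (\<not> c)) ({S i j b k | i b k. i < m \<and> (j, b) \<in> cl i \<and> 0 < k \<and> k < r}
    \<union> {U i | i. i < m \<and> (j, c) \<in> cl i})"
  \<comment> \<open>Paths entering the subdivided edges through the true literal start one step later.\<close>
  define d where "d x = (if x = litv j c then 0 else if x = litv j (\<not> c) then 1 else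
    case x of S _ _ b k \<Rightarrow> if b = c then r - k else Suc r - k | _ \<Rightarrow> r)" for x
  have d_simps: "d (litv j c) = 0" "d (litv j (\<not> c)) = 1" "d (U i) = r"
    "d (S i j' b k) = (if b = c then r - k else Suc r - k)"
    "d (V j) = (if c then 0 else 1)" "d (V' j) = (if c then 1 else 0)" for i j' b k
    unfolding d_def by (simp_all add: litv_eq_if)
  show ?thesis
  proof (rule reach_subset_if_closed[where d = d and Z = ?Z])
    fix x y assume x: "x \<in> insert (litv j c) ?Z" "d x < r"
      and y: "y \<in> GV n m cl r" "y \<noteq> litv j c" and e: "GE n m cl r x y"
    note order = \<sigma>[OF u y(1)] \<sigma>[OF y(1) u]
    from x consider (literal) c' where "x = litv j c'"
      | (path) i b k where "x = S i j b k" "i < m" "(j, b) \<in> cl i" "0 < k" "k < r"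
      by (auto simp: d_simps)
    then show "(\<sigma> (litv j c) < \<sigma> y \<longrightarrow> y \<in> W ` {2..7}) \<and>
      (\<sigma> y < \<sigma> (litv j c) \<longrightarrow> y \<in> ?Z \<and> d y \<le> Suc (d x))"
    proof cases
      case (literal c')
      from GE_litv_cases[OF r e[unfolded literal]] show ?thesis
        using literal order y r \<open>a j \<noteq> c\<close> by (auto simp: d_simps split: if_splits)
    next
      case (path i b k)
      then have "b = c \<or> 1 < k" using x(2) by (cases "b = c") (simp_all add: d_simps)
      from GE_S_cases[OF r e[unfolded path(1)]] consider
          (down_U) "k = 1" "y = U i" | (down) "1 < k" "y = S i j b (k - 1)"
        | (up_litv) "Suc k = r" "y = litv j b" | (up) "Suc k < r" "y = S i j b (Suc k)"
        by (auto split: if_splits)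
      then show ?thesis
        using path \<open>b = c \<or> 1 < k\<close> order y \<open>a j \<noteq> c\<close> by cases (auto simp: d_simps)
    qed
  qed (simp add: d_simps)
qed

lemma reach_W_subset:
  assumes u: "W e \<in> GV n m cl r"
  shows "reach (GV n m cl r) (GE n m cl r) r \<sigma> (W e) \<subseteq> W ` ({1..7} - {e})"
proof (rule reach_subset_if_closed[where d = "\<lambda>_. 0" and Z = "GV n m cl r"])
  fix y assume y: "y \<in> GV n m cl r" "y \<noteq> W e"
  show "(\<sigma> (W e) < \<sigma> y \<longrightarrow> y \<in> W ` ({1..7} - {e})) \<and>
      (\<sigma> y < \<sigma> (W e) \<longrightarrow> y \<in> GV n m cl r \<and> 0 \<le> Suc 0)"
    using \<sigma>[OF u y(1)] y by (cases y) auto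
qed simp

lemma card_reach_true_litv_le:
  assumes u: "litv j c \<in> GV n m cl r" and "a j = c"
  shows "card (reach (GV n m cl r) (GE n m cl r) r \<sigma> (litv j c)) \<le> 6"
proof -
  let ?Ws = "W ` (if c then {2, 3, 4} else {5, 6, 7})"
  let ?Us = "U ` {i. i < m \<and> (j, c) \<in> cl i}"
  have "card ?Ws \<le> 3" by (rule order_trans[OF card_image_le]) auto
  moreover have "card ?Us \<le> 2"
    using card_image_le[of "{i. i < m \<and> (j, c) \<in> cl i}" U] card_occurrences[OF sat3, of j c] u by simp
  moreover have "card (insert (litv j (\<not> c)) (?Ws \<union> ?Us)) \<le> Suc (card ?Ws + card ?Us)"
    using card_Un_le[of ?Ws ?Us] by (simp add: card_insert_if)
  ultimately show ?thesis
    using card_mono[OF _ reach_true_litv_subset[OF assms]] by fastforce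
qed

lemma card_reach_U_le:
  assumes u: "U i \<in> GV n m cl r"
  shows "card (reach (GV n m cl r) (GE n m cl r) r \<sigma> (U i)) \<le> 6"
proof -
  let ?F = "{(j, b) \<in> cl i. a j \<noteq> b}"
  let ?W5 = "if card (cl i) = 2 then {W 5} else {}"
  have fin: "finite (cl i)" using clause_finite[OF sat3] u by simp
  then have finF: "finite ?F" by (rule rev_finite_subset) auto
  obtain j b where "(j, b) \<in> cl i" "a j = b" using a u by auto
  then have "?F \<subset> cl i" by auto
  then have "card ?F < card (cl i)" using fin by (simp add: psubset_card_mono)
  then have count: "4 + card ?W5 + card ?F \<le> 6" using clause_card[OF sat3, of i] u by auto
  have "card (reach (GV n m cl r) (GE n m cl r) r \<sigma> (U i))
      \<le> card (W ` {1..4} \<union> ?W5 \<union> (\<lambda>(j, b). litv j b) ` ?F)"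
    by (rule card_mono[OF _ reach_U_subset[OF u]]) (use finF in simp)
  also have "\<dots> \<le> card (W ` {1..4::nat}) + card ?W5 + card ((\<lambda>(j, b). litv j b) ` ?F)"
    by (meson card_Un_le add_le_mono order_trans le_refl)
  also have "\<dots> \<le> 4 + card ?W5 + card ?F"
    using card_image_le[OF finF, of "\<lambda>(j, b). litv j b"] card_image_le[of "{1..4::nat}" W] by simp
  finally show ?thesis using count by linarith
qed

lemma card_reach_le:
  assumes "u \<in> GV n m cl r"
  shows "card (reach (GV n m cl r) (GE n m cl r) r \<sigma> u) \<le> 6"
proof (cases u)
  case (S i j b k)
  have "card {U i, if Suc k = r then litv j b else S i j b (Suc k)} \<le> 6" by (simp add: card_insert_if)
  then show ?thesis using card_mono[OF _ reach_S_subset] assms S by fastforce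
next
  case (U i)
  then show ?thesis using assms card_reach_U_le by simp
next
  case (W e)
  have "card (W ` ({1..7::nat} - {e})) \<le> 6" using card_image_le[of "{1..7::nat} - {e}" W] assms W by simp
  then show ?thesis using card_mono[OF _ reach_W_subset] assms W by fastforce
next
  case (V j)
  have "card (W ` {2..7::nat}) \<le> 6" by (rule order_trans[OF card_image_le]) auto
  then show ?thesis
    using V assms card_reach_true_litv_le[of j True] card_mono[OF _ reach_false_litv_subset[of j True]]
    by (cases "a j") fastforce+
next
  case (V' j)
  have "card (W ` {2..7::nat}) \<le> 6" by (rule order_trans[OF card_image_le]) auto
  then show ?thesis
    using V' assms card_reach_true_litv_le[of j False] card_mono[OF _ reach_false_litv_subset[of j False]]
    by (cases "a j") fastforce+
qed

end

theorem lemma3p14: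
  fixes n m r :: nat and cl :: "nat \<Rightarrow> (nat \<times> bool) set"
  assumes "r \<ge> 2"
    and "two_clause_3sat n m cl"
    and "satisfiable m cl"
  shows "col (GV n m cl r) (GE n m cl r) r \<le> 6"
proof -
  obtain a where a: "\<forall>i<m. \<exists>(j, b) \<in> cl i. a j = b"
    using assms(3) unfolding satisfiable_def by blast
  have fin: "finite (GV n m cl r)" using finite_GV[OF assms(2)] .
  obtain \<sigma> :: "vtx \<Rightarrow> nat" where \<sigma>: "inj_on \<sigma> (GV n m cl r)"
    "\<And>x y. x \<in> GV n m cl r \<Longrightarrow> y \<in> GV n m cl r \<Longrightarrow> \<sigma> x < \<sigma> y \<longleftrightarrow> key a x < key a y"
    using ex_nat_order_embedding[OF fin inj_on_subset[OF inj_key subset_UNIV]] by blast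
  have "W 1 \<in> GV n m cl r" by simp
  then show ?thesis
    using col_le_if_reach_card_le[OF fin _ \<sigma>(1)] card_reach_le[OF assms(1,2) a \<sigma>(2)] by blast
qed

end
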